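(* Consider the FJ-FA system with availability one and locality two (defined in the context), with systematic service rate $\gamma$ and recovery service rates $\mu$, and let $\nu = \gamma + 2\mu$. Then the limiting fraction $w_s$ of requests completed by the systematic server and the limiting fraction $w_r$ of requests completed by the recovery group satisfy $$w_s \ge \frac{\gamma\nu}{\gamma\nu + 2\mu^2}, \qquad w_r \le \frac{2\mu^2}{\gamma\nu + 2\mu^2}.$$
   Context: Three servers store $a$ (systematic server), $b$ and $a+b$ (the two servers of the single recovery group for $a$). Requests arrive as a Poisson process of rate $\lambda$, and every request asks for $a$ (FJ-FA). Each request is replicated into a copy at the systematic server and a copy at the recovery group; the latter is forked into one sub-copy at each of the two recovery servers and completes when both sub-copies finish. The request completes as soon as its systematic copy finishes or its recovery-group copy completes, and all its outstanding copies/sub-copies (queued or in service) are then removed immediately. Each server has a FCFS queue and serves one sub-copy at a time; service times are independent across servers and copies, $\mathrm{Exp}(\gamma)$ at the systematic server and $\mathrm{Exp}(\mu)$ at each recovery server. The system is assumed stable and $w_s$, $w_r$ are steady-state (limiting) fractions of request completions, with $w_s + w_r = 1$. *)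

theory Defs
  imports "HOL-Probability.Probability"
begin

text \<open>
  A state is the list of requests present, in arrival order (FCFS).  Each request
  carries two flags: whether its sub-copy at recovery server b has finished
  (first flag) and whether its sub-copy at recovery server a+b has finished
  (second flag).  The systematic server serves the oldest request (every request
  present still has its systematic copy).  Each recovery server serves the oldest
  request whose sub-copy at that server has not finished yet.
\<close>

type_synonym fjfa_state = "(bool \<times> bool) list"

text \<open>Service completion at recovery server b: new state, and whether the
  request thereby completes via its recovery group.\<close>
fun serve_b :: "fjfa_state \<Rightarrow> (fjfa_state \<times> bool) option" where
  "serve_b [] = None"
| "serve_b ((b, c) # xs) =
     (if \<not> b then Some (if c then (xs, True) else ((True, c) # xs, False))
      else map_option (\<lambda>(ys, d). ((b, c) # ys, d)) (serve_b xs))"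

fun serve_ab :: "fjfa_state \<Rightarrow> (fjfa_state \<times> bool) option" where
  "serve_ab [] = None"
| "serve_ab ((b, c) # xs) =
     (if \<not> c then Some (if b then (xs, True) else ((b, True) # xs, False))
      else map_option (\<lambda>(ys, d). ((b, c) # ys, d)) (serve_ab xs))"

definition fjfa_trans :: "real \<Rightarrow> real \<Rightarrow> real \<Rightarrow> fjfa_state \<Rightarrow> (real \<times> fjfa_state) list" where
  "fjfa_trans lam gam mu xs =
     [(lam, xs @ [(False, False)])]
     @ (if xs = [] then [] else [(gam, tl xs)])
     @ (case serve_b xs of None \<Rightarrow> [] | Some (ys, _) \<Rightarrow> [(mu, ys)])
     @ (case serve_ab xs of None \<Rightarrow> [] | Some (ys, _) \<Rightarrow> [(mu, ys)])"

definition fjfa_rate :: "real \<Rightarrow> real \<Rightarrow> real \<Rightarrow> fjfa_state \<Rightarrow> fjfa_state \<Rightarrow> real" where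
  "fjfa_rate lam gam mu x y =
     sum_list (map fst (filter (\<lambda>(r, z). z = y) (fjfa_trans lam gam mu x)))"

definition fjfa_out :: "real \<Rightarrow> real \<Rightarrow> real \<Rightarrow> fjfa_state \<Rightarrow> real" where
  "fjfa_out lam gam mu x =
     sum_list (map fst (filter (\<lambda>(r, z). z \<noteq> x) (fjfa_trans lam gam mu x)))"

definition fjfa_stationary :: "real \<Rightarrow> real \<Rightarrow> real \<Rightarrow> fjfa_state pmf \<Rightarrow> bool" where
  "fjfa_stationary lam gam mu p \<longleftrightarrow>
     (\<forall>y. ((\<lambda>x. pmf p x * fjfa_rate lam gam mu x y) has_sum
            (pmf p y * fjfa_out lam gam mu y)) UNIV)"

definition sys_compl_rate :: "real \<Rightarrow> fjfa_state \<Rightarrow> real" where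
  "sys_compl_rate gam xs = (if xs \<noteq> [] then gam else 0)"

definition rec_compl_rate :: "real \<Rightarrow> fjfa_state \<Rightarrow> real" where
  "rec_compl_rate mu xs =
     (case serve_b xs of Some (_, True) \<Rightarrow> mu | _ \<Rightarrow> 0)
   + (case serve_ab xs of Some (_, True) \<Rightarrow> mu | _ \<Rightarrow> 0)"

definition sys_throughput :: "real \<Rightarrow> fjfa_state pmf \<Rightarrow> real" where
  "sys_throughput gam p = (\<Sum>\<^sub>\<infinity>x. pmf p x * sys_compl_rate gam x)"

definition rec_throughput :: "real \<Rightarrow> fjfa_state pmf \<Rightarrow> real" where
  "rec_throughput mu p = (\<Sum>\<^sub>\<infinity>x. pmf p x * rec_compl_rate mu x)"

definition w_s :: "real \<Rightarrow> real \<Rightarrow> fjfa_state pmf \<Rightarrow> real" where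
  "w_s gam mu p = sys_throughput gam p / (sys_throughput gam p + rec_throughput mu p)"

definition w_r :: "real \<Rightarrow> real \<Rightarrow> fjfa_state pmf \<Rightarrow> real" where
  "w_r gam mu p = rec_throughput mu p / (sys_throughput gam p + rec_throughput mu p)"

end

theory Submission
  imports Defs
begin

text \<open>
  Started from the empty state, the two recovery servers are always in a configuration
  where one of them is ahead of the other by \<open>k\<close> requests (whose sub-copy only the leader
  has finished) and the \<open>n\<close> younger requests are untouched; a stationary distribution
  lives on these states.  There the recovery group completes requests at rate \<open>\<mu>\<close> exactly
  when \<open>k > 0\<close>, and the systematic server at rate \<open>\<gamma>\<close> whenever the system is nonempty.
  The potential \<open>min k N\<close> drifts at rate at most \<open>-\<gamma>\<close> when \<open>0 < k \<le> N\<close> and at most \<open>2\<mu>\<close>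
  when \<open>k = 0 < n\<close>, so \<open>\<gamma>\<nu> \<cdot> rec - 2\<mu>\<^sup>2 \<cdot> sys + \<gamma>\<mu> \<cdot> drift \<le> \<gamma>\<^sup>2\<mu> [k > N]\<close> pointwise.
  Bounded functions have mean drift zero under a stationary distribution; taking
  expectations and letting \<open>N \<rightarrow> \<infinity>\<close> gives \<open>\<gamma>\<nu> R \<le> 2\<mu>\<^sup>2 S\<close> for the two throughputs,
  which is equivalent to both bounds.
\<close>

section \<open>Rate kernels and balanced distributions\<close>

definition total_rate :: "(real \<times> 'a) list \<Rightarrow> real" where
  "total_rate L = sum_list (map fst L)"

definition rate_to :: "(real \<times> 'a) list \<Rightarrow> 'a \<Rightarrow> real" where
  "rate_to L y = total_rate (filter (\<lambda>(r, z). z = y) L)"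

definition generator :: "('a \<Rightarrow> (real \<times> 'a) list) \<Rightarrow> ('a \<Rightarrow> real) \<Rightarrow> 'a \<Rightarrow> real" where
  "generator T f x = (\<Sum>(r, z)\<leftarrow>T x. r * (f z - f x))"

definition balanced :: "('a \<Rightarrow> (real \<times> 'a) list) \<Rightarrow> 'a pmf \<Rightarrow> bool" where
  "balanced T p \<longleftrightarrow>
     (\<forall>y. ((\<lambda>x. pmf p x * rate_to (T x) y) has_sum pmf p y * total_rate (T y)) UNIV)"

lemma total_rate_nonneg: "(\<And>r z. (r, z) \<in> set L \<Longrightarrow> 0 \<le> r) \<Longrightarrow> 0 \<le> total_rate L"
  by (auto simp: total_rate_def intro!: sum_list_nonneg)

lemma rate_to_nonneg: "(\<And>r z. (r, z) \<in> set L \<Longrightarrow> 0 \<le> r) \<Longrightarrow> 0 \<le> rate_to L y"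
  unfolding rate_to_def by (rule total_rate_nonneg) auto

lemma rate_to_ge: "(\<And>r z. (r, z) \<in> set L \<Longrightarrow> 0 \<le> r) \<Longrightarrow> (r, y) \<in> set L \<Longrightarrow> r \<le> rate_to L y"
  unfolding rate_to_def total_rate_def by (rule member_le_sum_list) force+

lemma sum_rates_diff:
  "(\<Sum>(r, z)\<leftarrow>L. r * (f z - c)) = (\<Sum>(r, z)\<leftarrow>L. r * f z) - total_rate L * c"
  by (induction L) (auto simp: total_rate_def algebra_simps)

lemma abs_sum_rates_le:
  fixes f :: "'a \<Rightarrow> real"
  assumes "\<And>r z. (r, z) \<in> set L \<Longrightarrow> 0 \<le> r" and "\<And>z. \<bar>f z\<bar> \<le> M"
  shows "\<bar>\<Sum>(r, z)\<leftarrow>L. r * f z\<bar> \<le> total_rate L * M"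
  using assms(1)
proof (induction L)
  case (Cons a L)
  obtain r z where a: "a = (r, z)" by fastforce
  have r: "0 \<le> r"
    using Cons.prems[of r z] by (simp add: a)
  have "\<bar>r * f z\<bar> \<le> r * M"
    using r assms(2)[of z] by (simp add: abs_mult mult_left_mono)
  moreover have "\<bar>\<Sum>(r, z)\<leftarrow>L. r * f z\<bar> \<le> total_rate L * M"
    by (rule Cons.IH) (use Cons.prems in auto)
  ultimately show ?case
    using abs_triangle_ineq[of "r * f z" "\<Sum>(r, z)\<leftarrow>L. r * f z"]
    by (simp add: a total_rate_def algebra_simps)
qed (simp add: total_rate_def)

lemma has_sum_rate_to:
  fixes f :: "'a \<Rightarrow> real"
  shows "((\<lambda>y. rate_to L y * f y) has_sum (\<Sum>(r, z)\<leftarrow>L. r * f z)) UNIV"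
proof (induction L)
  case (Cons a L)
  obtain r z where a: "a = (r, z)" by fastforce
  have "((\<lambda>y. if z = y then r * f y else 0) has_sum r * f z) UNIV"
    by (subst has_sum_cong_neutral[where T = "{z}"]) (auto intro: has_sum_finiteI)
  moreover have "rate_to (a # L) y * f y = (if z = y then r * f y else 0) + rate_to L y * f y" for y
    by (simp add: a rate_to_def total_rate_def algebra_simps)
  ultimately show ?case
    using has_sum_add[OF _ Cons.IH] by (simp add: a)
qed (simp add: rate_to_def total_rate_def)

lemma summable_on_pmf: "pmf p summable_on A"
  using abs_summable_equivalent abs_summable_summable pmf_abs_summable by blast

lemma summable_on_pmf_times_bounded:
  fixes f :: "'a \<Rightarrow> real"
  assumes "\<And>x. \<bar>f x\<bar> \<le> C"
  shows "(\<lambda>x. pmf p x * f x) summable_on A"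
proof -
  have "(\<lambda>x. C * pmf p x) summable_on A"
    by (intro summable_on_cmult_right summable_on_pmf)
  then have "(\<lambda>x. norm (pmf p x * f x)) summable_on A"
    by (rule summable_on_comparison_test)
       (auto simp: abs_mult mult.commute intro!: mult_right_mono assms)
  then show ?thesis
    by (rule abs_summable_summable)
qed

lemma has_sum_pmf_indicator:
  "((\<lambda>x. pmf p x * of_bool (x \<in> A)) has_sum measure_pmf.prob p A) UNIV"
proof -
  have "(pmf p has_sum infsum (pmf p) A) A"
    by (intro has_sum_infsum summable_on_pmf)
  then have "((\<lambda>x. pmf p x * of_bool (x \<in> A)) has_sum infsum (pmf p) A) UNIV"
    by (subst has_sum_cong_neutral[where T = A]) auto
  then show ?thesis
    by (simp add: measure_pmf_conv_infsetsum infsetsum_infsum pmf_abs_summable)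
qed

locale bounded_rate_kernel =
  fixes T :: "'a \<Rightarrow> (real \<times> 'a) list" and K :: real
  assumes rate_nonneg: "(r, z) \<in> set (T x) \<Longrightarrow> 0 \<le> r"
    and total_rate_le: "total_rate (T x) \<le> K"
begin

lemma abs_total_rate_le: "\<bar>total_rate (T x)\<bar> \<le> K"
  using total_rate_nonneg[of "T x"] rate_nonneg total_rate_le by (simp add: abs_le_iff)

lemma rate_to_T_nonneg: "0 \<le> rate_to (T x) y"
  by (rule rate_to_nonneg) (rule rate_nonneg)

lemma balanced_pmf_pos_successor:
  assumes "balanced T p" and "(r, z) \<in> set (T x)" "0 < r" "0 < pmf p x"
  shows "0 < pmf p z"
proof -
  have inflow: "((\<lambda>x'. pmf p x' * rate_to (T x') z) has_sum pmf p z * total_rate (T z)) UNIV"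
    using assms(1) by (simp add: balanced_def)
  have "r \<le> rate_to (T x) z"
    by (rule rate_to_ge) (use assms(2) rate_nonneg in auto)
  then have "0 < pmf p x * rate_to (T x) z"
    using assms(3,4) by simp
  also have "\<dots> \<le> pmf p z * total_rate (T z)"
    by (rule finite_sum_le_has_sum[OF inflow, of "{x}", simplified])
       (simp add: rate_to_T_nonneg)
  finally show ?thesis
    using pmf_nonneg[of p z] by (auto simp: zero_less_mult_iff)
qed

lemma abs_sum_rates_T_le:
  assumes "\<And>z. \<bar>f z\<bar> \<le> M"
  shows "\<bar>\<Sum>(r, z)\<leftarrow>T x. r * f z\<bar> \<le> K * M"
proof -
  have "\<bar>\<Sum>(r, z)\<leftarrow>T x. r * f z\<bar> \<le> total_rate (T x) * M"
    by (intro abs_sum_rates_le rate_nonneg assms)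
  also have "\<dots> \<le> K * M"
    using assms[of x] total_rate_le by (intro mult_right_mono) auto
  finally show ?thesis .
qed

text \<open>Fubini for the nonnegative flow \<open>pmf p x * rate_to (T x) y\<close>, summed once over its
  source \<open>x\<close> and once, using the balance equations, over its target \<open>y\<close>.\<close>
lemma infsum_pmf_jumps_eq:
  assumes bal: "balanced T p" and f_bounded: "\<And>x. \<bar>f x\<bar> \<le> M"
  shows "(\<Sum>\<^sub>\<infinity>x. pmf p x * (\<Sum>(r, z)\<leftarrow>T x. r * f z))
         = (\<Sum>\<^sub>\<infinity>x. pmf p x * (total_rate (T x) * f x))"
proof -
  define R where "R x y = pmf p x * rate_to (T x) y" for x y
  have R_nonneg: "0 \<le> R x y" for x y
    unfolding R_def by (simp add: rate_to_T_nonneg)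
  have outflow: "((\<lambda>y. R x y * h y) has_sum pmf p x * (\<Sum>(r, z)\<leftarrow>T x. r * h z)) UNIV"
    for x and h :: "'a \<Rightarrow> real"
    using has_sum_cmult_right[OF has_sum_rate_to, of "pmf p x"]
    by (simp add: R_def mult.assoc)
  have inflow: "((\<lambda>x. R x y) has_sum pmf p y * total_rate (T y)) UNIV" for y
    using bal by (simp add: balanced_def R_def)
  have R_summable: "(\<lambda>(x, y). R x y) summable_on UNIV \<times> UNIV"
  proof (rule summable_on_SigmaI[where g = "\<lambda>x. pmf p x * total_rate (T x)"])
    show "((\<lambda>y. case (x, y) of (x, y) \<Rightarrow> R x y) has_sum pmf p x * total_rate (T x)) UNIV" for x
      using outflow[of x "\<lambda>_. 1"] by (simp add: total_rate_def case_prod_unfold)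
    show "(\<lambda>x. pmf p x * total_rate (T x)) summable_on UNIV"
      by (rule summable_on_pmf_times_bounded[OF abs_total_rate_le])
  qed (simp add: R_nonneg)
  have "\<bar>R x y * f y\<bar> \<le> R x y * M" for x y
    using f_bounded[of y] R_nonneg[of x y] by (simp add: abs_mult mult_left_mono)
  then have "(\<lambda>xy. norm (case xy of (x, y) \<Rightarrow> R x y * f y)) summable_on UNIV \<times> UNIV"
    by (intro summable_on_comparison_test[OF summable_on_cmult_left[OF R_summable, of M]]) auto
  then have swap: "(\<Sum>\<^sub>\<infinity>x. \<Sum>\<^sub>\<infinity>y. R x y * f y) = (\<Sum>\<^sub>\<infinity>y. \<Sum>\<^sub>\<infinity>x. R x y * f y)"
    by (rule infsum_swap_banach[OF abs_summable_summable])
  have "(\<Sum>\<^sub>\<infinity>x. pmf p x * (\<Sum>(r, z)\<leftarrow>T x. r * f z)) = (\<Sum>\<^sub>\<infinity>x. \<Sum>\<^sub>\<infinity>y. R x y * f y)"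
    by (rule infsum_cong) (rule infsumI[OF outflow, symmetric])
  also have "\<dots> = (\<Sum>\<^sub>\<infinity>y. pmf p y * (total_rate (T y) * f y))"
    unfolding swap using has_sum_cmult_left[OF inflow]
    by (intro infsum_cong infsumI) (simp add: mult.assoc)
  finally show ?thesis .
qed

lemma has_sum_pmf_generator:
  assumes bal: "balanced T p" and f_bounded: "\<And>x. \<bar>f x\<bar> \<le> M"
  shows "((\<lambda>x. pmf p x * generator T f x) has_sum 0) UNIV"
proof -
  have jumps: "((\<lambda>x. pmf p x * (\<Sum>(r, z)\<leftarrow>T x. r * f z)) has_sum
          (\<Sum>\<^sub>\<infinity>x. pmf p x * (total_rate (T x) * f x))) UNIV"
    unfolding infsum_pmf_jumps_eq[OF assms, symmetric] using f_bounded
    by (intro has_sum_infsum summable_on_pmf_times_bounded[where C = "K * M"] abs_sum_rates_T_le)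
  have stays: "((\<lambda>x. pmf p x * (total_rate (T x) * f x)) has_sum
          (\<Sum>\<^sub>\<infinity>x. pmf p x * (total_rate (T x) * f x))) UNIV"
    using abs_total_rate_le f_bounded
    by (intro has_sum_infsum summable_on_pmf_times_bounded[where C = "K * M"])
       (simp add: abs_mult mult_mono')
  from has_sum_add[OF jumps has_sum_cmult_right[OF stays, of "-1"]] show ?thesis
    unfolding generator_def sum_rates_diff by (simp add: algebra_simps)
qed

text \<open>The indicator of the closed set \<open>V\<close> has nonnegative generator and mean zero, so from a
  charged state outside \<open>V\<close> every positive-rate transition stays outside \<open>V\<close> and charges
  its target; following the \<open>h\<close>-decreasing ones gives an infinite descent.\<close>
lemma pmf_eq_0_outside_closed:
  fixes h :: "'a \<Rightarrow> nat"
  assumes bal: "balanced T p"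
    and closed: "\<And>x r z. x \<in> V \<Longrightarrow> (r, z) \<in> set (T x) \<Longrightarrow> z \<in> V"
    and escape: "\<And>x. x \<notin> V \<Longrightarrow> \<exists>r z. (r, z) \<in> set (T x) \<and> 0 < r \<and> h z < h x"
    and "x \<notin> V"
  shows "pmf p x = 0"
proof -
  define f :: "'a \<Rightarrow> real" where "f x = of_bool (x \<in> V)" for x
  have terms_nonneg: "0 \<le> r * (f z - f x)" if "(r, z) \<in> set (T x)" for r z x
    using that rate_nonneg closed by (auto simp: f_def)
  then have drift_nonneg: "0 \<le> pmf p x * generator T f x" for x
    unfolding generator_def by (intro mult_nonneg_nonneg pmf_nonneg sum_list_nonneg) auto
  have "((\<lambda>x. pmf p x * generator T f x) has_sum 0) UNIV"
    by (rule has_sum_pmf_generator[OF bal, of f 1]) (simp add: f_def)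
  then have no_drift: "pmf p x * generator T f x = 0" for x
    by (rule nonneg_has_sum_le_0D) (use drift_nonneg in auto)
  have stays_outside: "z \<notin> V"
    if "x \<notin> V" "0 < pmf p x" "(r, z) \<in> set (T x)" "0 < r" for x r z
  proof -
    have "generator T f x = 0"
      using no_drift[of x] that(2) by simp
    then have "r * (f z - f x) = 0"
      unfolding generator_def using that(3) terms_nonneg[of _ _ x]
      by (subst (asm) sum_list_nonneg_eq_0_iff) force+
    then show ?thesis
      using that(1,4) by (simp add: f_def)
  qed
  show ?thesis
    using \<open>x \<notin> V\<close>
  proof (induction x rule: measure_induct_rule[of h])
    case (less x)
    obtain r z where z: "(r, z) \<in> set (T x)" "0 < r" "h z < h x"
      using escape[OF less.prems] by blast
    show ?case
    proof (rule ccontr)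
      assume "pmf p x \<noteq> 0"
      then have "0 < pmf p x"
        using pmf_nonneg[of p x] by linarith
      then have "z \<notin> V" and "0 < pmf p z"
        using stays_outside[OF less.prems] balanced_pmf_pos_successor[OF bal] z by auto
      then show False
        using less.IH[OF \<open>h z < h x\<close>] by simp
    qed
  qed
qed

end

section \<open>The FJ-FA chain\<close>

fun unfinished_subcopies :: "bool \<times> bool \<Rightarrow> nat" where
  "unfinished_subcopies (b, c) = of_bool (\<not> b) + of_bool (\<not> c)"

lemma serve_b_decreases:
  "serve_b x = Some (y, d) \<Longrightarrow>
     (\<Sum>q\<leftarrow>y. unfinished_subcopies q) < (\<Sum>q\<leftarrow>x. unfinished_subcopies q)"
  by (induction x arbitrary: y d rule: serve_b.induct) (auto split: if_splits)

lemma serve_ab_decreases: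
  "serve_ab x = Some (y, d) \<Longrightarrow>
     (\<Sum>q\<leftarrow>y. unfinished_subcopies q) < (\<Sum>q\<leftarrow>x. unfinished_subcopies q)"
  by (induction x arbitrary: y d rule: serve_ab.induct) (auto split: if_splits)

lemma fjfa_trans_cases:
  assumes "(r, z) \<in> set (fjfa_trans lam gam mu x)"
  obtains "r = lam" "z = x @ [(False, False)]"
    | "r = gam" "x \<noteq> []" "z = tl x"
    | d where "r = mu" "serve_b x = Some (z, d)"
    | d where "r = mu" "serve_ab x = Some (z, d)"
  using assms by (auto simp: fjfa_trans_def split: option.splits if_splits) (metis, metis)

lemma fjfa_trans_no_self_loop: "(r, z) \<in> set (fjfa_trans lam gam mu x) \<Longrightarrow> z \<noteq> x"
  by (elim fjfa_trans_cases) (auto simp: neq_Nil_conv dest: serve_b_decreases serve_ab_decreases)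

lemma fjfa_bounded_rate_kernel:
  assumes "0 \<le> lam" "0 \<le> gam" "0 \<le> mu"
  shows "bounded_rate_kernel (fjfa_trans lam gam mu) (lam + gam + 2 * mu)"
proof
  show "0 \<le> r" if "(r, z) \<in> set (fjfa_trans lam gam mu x)" for r z x
    using that assms by (elim fjfa_trans_cases) auto
  show "total_rate (fjfa_trans lam gam mu x) \<le> lam + gam + 2 * mu" for x
    using assms by (auto simp: fjfa_trans_def total_rate_def split: option.splits)
qed

lemma fjfa_stationary_iff_balanced:
  "fjfa_stationary lam gam mu p \<longleftrightarrow> balanced (fjfa_trans lam gam mu) p"
proof -
  have "fjfa_out lam gam mu y = total_rate (fjfa_trans lam gam mu y)" for y
    unfolding fjfa_out_def total_rate_def
    by (subst filter_True) (auto dest: fjfa_trans_no_self_loop)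
  then show ?thesis
    by (simp add: fjfa_stationary_def balanced_def fjfa_rate_def rate_to_def total_rate_def)
qed

text \<open>The recovery server b (if \<open>t\<close>) or a+b (if \<open>\<not> t\<close>) has finished its sub-copies of the
  \<open>k\<close> oldest requests, which the other one has not; the \<open>n\<close> younger requests are untouched.\<close>
definition ahead_state :: "bool \<Rightarrow> nat \<Rightarrow> nat \<Rightarrow> fjfa_state" where
  "ahead_state t k n = replicate k (t, \<not> t) @ replicate n (False, False)"

definition fjfa_reachable :: "fjfa_state \<Rightarrow> bool" where
  "fjfa_reachable x \<longleftrightarrow> (\<exists>t k n. x = ahead_state t k n)"

definition lead :: "fjfa_state \<Rightarrow> nat" where
  "lead x = length (takeWhile (\<lambda>(b, c). b \<noteq> c) x)"

lemma lead_ahead_state [simp]: "lead (ahead_state t k n) = k"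
  by (induction k) (cases n, auto simp: lead_def ahead_state_def)

lemma ahead_state_eq_Nil_iff [simp]: "ahead_state t k n = [] \<longleftrightarrow> k = 0 \<and> n = 0"
  by (simp add: ahead_state_def)

lemma ahead_state_snoc: "ahead_state t k n @ [(False, False)] = ahead_state t k (Suc n)"
  by (simp add: ahead_state_def replicate_append_same)

lemma tl_ahead_state:
  "tl (ahead_state t k n) = (if k = 0 then ahead_state t 0 (n - 1) else ahead_state t (k - 1) n)"
  by (cases k; cases n) (auto simp: ahead_state_def)

lemma serve_b_ahead_state:
  "serve_b (ahead_state t k n) =
     (if t \<or> k = 0 then (if n = 0 then None else Some (ahead_state True (Suc k) (n - 1), False))
      else Some (ahead_state False (k - 1) n, True))"
  by (induction k) (cases n, auto simp: ahead_state_def)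

lemma serve_ab_ahead_state:
  "serve_ab (ahead_state t k n) =
     (if \<not> t \<or> k = 0 then (if n = 0 then None else Some (ahead_state False (Suc k) (n - 1), False))
      else Some (ahead_state True (k - 1) n, True))"
  by (induction k) (cases n, auto simp: ahead_state_def)

lemma fjfa_reachable_ahead_state [simp]: "fjfa_reachable (ahead_state t k n)"
  unfolding fjfa_reachable_def by blast

lemma fjfa_reachable_closed:
  assumes "fjfa_reachable x" "(r, z) \<in> set (fjfa_trans lam gam mu x)"
  shows "fjfa_reachable z"
proof -
  obtain t k n where x: "x = ahead_state t k n"
    using assms(1) fjfa_reachable_def by blast
  from assms(2) show ?thesis
    by (elim fjfa_trans_cases)
       (auto simp: x ahead_state_snoc tl_ahead_state serve_b_ahead_state serve_ab_ahead_state
             split: if_splits)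
qed

lemma fjfa_pmf_unreachable:
  assumes "0 < lam" "0 < gam" "0 < mu" "fjfa_stationary lam gam mu p" "\<not> fjfa_reachable x"
  shows "pmf p x = 0"
proof -
  interpret bounded_rate_kernel "fjfa_trans lam gam mu" "lam + gam + 2 * mu"
    using assms by (intro fjfa_bounded_rate_kernel) auto
  have "fjfa_reachable []"
    by (metis ahead_state_eq_Nil_iff fjfa_reachable_ahead_state)
  then have "(gam, tl y) \<in> set (fjfa_trans lam gam mu y) \<and> 0 < gam \<and> length (tl y) < length y"
    if "\<not> fjfa_reachable y" for y
    using that assms(2) by (cases y) (auto simp: fjfa_trans_def)
  then show ?thesis
    using assms(4,5) fjfa_reachable_closed
    by (intro pmf_eq_0_outside_closed[where V = "Collect fjfa_reachable" and h = length])
       (auto simp: fjfa_stationary_iff_balanced simp del: length_tl)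
qed

text \<open>Capped so that it is bounded and hence has mean drift zero.\<close>
definition capped_lead :: "nat \<Rightarrow> fjfa_state \<Rightarrow> real" where
  "capped_lead N x = real (min (lead x) N)"

lemma generator_capped_lead_le:
  assumes "0 \<le> mu"
  shows "generator (fjfa_trans lam gam mu) (capped_lead N) (ahead_state t k n)
         \<le> (if k = 0 then (if n = 0 then 0 else 2 * mu) else if k \<le> N then - gam else 0)"
proof (cases "k = 0")
  case True
  then show ?thesis
    using assms
    by (cases n; cases N) (simp_all add: generator_def fjfa_trans_def capped_lead_def ahead_state_snoc
        tl_ahead_state serve_b_ahead_state serve_ab_ahead_state)
next
  case False
  have "mu * (real (min (Suc k) N) - real k) \<le> mu"
    using assms by (intro mult_left_le) auto
  with False assms show ?thesis
    by (cases t; cases n; cases "k \<le> N")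
       (simp_all add: generator_def fjfa_trans_def capped_lead_def ahead_state_snoc
        tl_ahead_state serve_b_ahead_state serve_ab_ahead_state)
qed

lemma rec_compl_rate_ahead_state:
  "rec_compl_rate mu (ahead_state t k n) = (if k = 0 then 0 else mu)"
  by (cases t) (simp_all add: rec_compl_rate_def serve_b_ahead_state serve_ab_ahead_state)

lemma fjfa_drift_le:
  assumes "0 < gam" "0 < mu" "fjfa_reachable x"
  shows "gam * (gam + 2 * mu) * rec_compl_rate mu x - 2 * mu ^ 2 * sys_compl_rate gam x
           + gam * mu * generator (fjfa_trans lam gam mu) (capped_lead N) x
         \<le> gam ^ 2 * mu * of_bool (N < lead x)"
proof -
  obtain t k n where x: "x = ahead_state t k n"
    using assms(3) fjfa_reachable_def by blast
  have rec: "rec_compl_rate mu x = (if k = 0 then 0 else mu)"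
    by (simp add: x rec_compl_rate_ahead_state)
  have sys: "sys_compl_rate gam x = (if k = 0 \<and> n = 0 then 0 else gam)"
    by (simp add: x sys_compl_rate_def)
  have lead: "lead x = k"
    by (simp add: x)
  define G where "G = generator (fjfa_trans lam gam mu) (capped_lead N) x"
  have G_le: "G \<le> (if k = 0 then (if n = 0 then 0 else 2 * mu) else if k \<le> N then - gam else 0)"
    unfolding G_def x using assms(2) by (intro generator_capped_lead_le) simp
  have gm: "0 < gam * mu"
    using assms(1,2) by simp
  consider "k = 0" "n = 0" | "k = 0" "n \<noteq> 0" | "k \<noteq> 0" "k \<le> N" | "N < k"
    by linarith
  then have "gam * (gam + 2 * mu) * rec_compl_rate mu x - 2 * mu ^ 2 * sys_compl_rate gam x
               + gam * mu * G \<le> gam ^ 2 * mu * of_bool (N < lead x)"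
  proof cases
    case 1
    then show ?thesis
      using mult_left_mono[of G 0 "gam * mu"] G_le gm by (simp add: rec sys lead)
  next
    case 2
    then have "gam * mu * G \<le> gam * mu * (2 * mu)"
      using G_le gm by (intro mult_left_mono) simp_all
    then show ?thesis
      using 2 by (simp add: rec sys lead power2_eq_square algebra_simps)
  next
    case 3
    then have "gam * mu * G \<le> gam * mu * (- gam)"
      using G_le gm by (intro mult_left_mono) simp_all
    then show ?thesis
      using 3 by (simp add: rec sys lead power2_eq_square algebra_simps)
  next
    case 4
    then have "gam * mu * G \<le> 0"
      using G_le gm by (intro mult_nonneg_nonpos) simp_all
    then show ?thesis
      using 4 by (simp add: rec sys lead power2_eq_square algebra_simps)
  qed
  then show ?thesis
    by (simp add: G_def)
qed

lemma has_sum_rec_throughput: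
  "0 \<le> mu \<Longrightarrow> ((\<lambda>x. pmf p x * rec_compl_rate mu x) has_sum rec_throughput mu p) UNIV"
  unfolding rec_throughput_def
  by (intro has_sum_infsum summable_on_pmf_times_bounded[where C = "2 * mu"])
     (auto simp: rec_compl_rate_def split: option.splits bool.splits)

lemma has_sum_sys_throughput:
  "0 \<le> gam \<Longrightarrow> ((\<lambda>x. pmf p x * sys_compl_rate gam x) has_sum sys_throughput gam p) UNIV"
  unfolding sys_throughput_def
  by (intro has_sum_infsum summable_on_pmf_times_bounded[where C = gam])
     (simp add: sys_compl_rate_def)

lemma fjfa_throughput_gap_le:
  assumes pos: "0 < lam" "0 < gam" "0 < mu" and stat: "fjfa_stationary lam gam mu p"
  shows "gam * (gam + 2 * mu) * rec_throughput mu p - 2 * mu ^ 2 * sys_throughput gam p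
         \<le> gam ^ 2 * mu * measure_pmf.prob p {x. N < lead x}"
proof -
  interpret bounded_rate_kernel "fjfa_trans lam gam mu" "lam + gam + 2 * mu"
    using pos by (intro fjfa_bounded_rate_kernel) auto
  have rec: "((\<lambda>x. pmf p x * rec_compl_rate mu x) has_sum rec_throughput mu p) UNIV"
    using pos(3) by (intro has_sum_rec_throughput) simp
  have sys: "((\<lambda>x. pmf p x * sys_compl_rate gam x) has_sum sys_throughput gam p) UNIV"
    using pos(2) by (intro has_sum_sys_throughput) simp
  have gen: "((\<lambda>x. pmf p x * generator (fjfa_trans lam gam mu) (capped_lead N) x) has_sum 0) UNIV"
    using stat by (intro has_sum_pmf_generator[where M = N])
                  (auto simp: fjfa_stationary_iff_balanced capped_lead_def)
  have "((\<lambda>x. pmf p x * (gam * (gam + 2 * mu) * rec_compl_rate mu x - 2 * mu ^ 2 * sys_compl_rate gam x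
            + gam * mu * generator (fjfa_trans lam gam mu) (capped_lead N) x)) has_sum
        gam * (gam + 2 * mu) * rec_throughput mu p - 2 * mu ^ 2 * sys_throughput gam p) UNIV"
    using has_sum_add[OF has_sum_add[OF has_sum_cmult_right[OF rec, of "gam * (gam + 2 * mu)"]
        has_sum_cmult_right[OF sys, of "- 2 * mu ^ 2"]] has_sum_cmult_right[OF gen, of "gam * mu"]]
    by (simp add: algebra_simps)
  moreover have "((\<lambda>x. pmf p x * (gam ^ 2 * mu * of_bool (N < lead x))) has_sum
      gam ^ 2 * mu * measure_pmf.prob p {x. N < lead x}) UNIV"
    using has_sum_cmult_right[OF has_sum_pmf_indicator[of p "{x. N < lead x}"], of "gam ^ 2 * mu"]
    by (simp add: algebra_simps)
  ultimately show ?thesis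
  proof (rule has_sum_mono)
    show "pmf p x * (gam * (gam + 2 * mu) * rec_compl_rate mu x - 2 * mu ^ 2 * sys_compl_rate gam x
            + gam * mu * generator (fjfa_trans lam gam mu) (capped_lead N) x)
          \<le> pmf p x * (gam ^ 2 * mu * of_bool (N < lead x))" for x
    proof (cases "fjfa_reachable x")
      case True
      then show ?thesis
        by (intro mult_left_mono fjfa_drift_le pos pmf_nonneg)
    next
      case False
      then show ?thesis
        using fjfa_pmf_unreachable[OF pos stat] by simp
    qed
  qed
qed

lemma fjfa_throughput_gap_nonpos:
  assumes "0 < lam" "0 < gam" "0 < mu" "fjfa_stationary lam gam mu p"
  shows "gam * (gam + 2 * mu) * rec_throughput mu p - 2 * mu ^ 2 * sys_throughput gam p \<le> 0"
proof -
  have "decseq (\<lambda>N. {x. N < lead x})"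
    by (auto simp: decseq_def)
  moreover have "(\<Inter>N. {x. N < lead x}) = {}"
    by auto
  ultimately have "(\<lambda>N. measure_pmf.prob p {x. N < lead x}) \<longlonglongrightarrow> 0"
    using measure_pmf.finite_Lim_measure_decseq[of "\<lambda>N. {x. N < lead x}"] by simp
  then have "(\<lambda>N. gam ^ 2 * mu * measure_pmf.prob p {x. N < lead x}) \<longlonglongrightarrow> 0"
    by (simp add: tendsto_mult_right_zero)
  then show ?thesis
    using fjfa_throughput_gap_le[OF assms] by (intro LIMSEQ_le_const) auto
qed

lemma fjfa_sys_throughput_pos:
  assumes pos: "0 < lam" "0 < gam" "0 < mu" and stat: "fjfa_stationary lam gam mu p"
  shows "0 < sys_throughput gam p"
proof -
  interpret bounded_rate_kernel "fjfa_trans lam gam mu" "lam + gam + 2 * mu"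
    using pos by (intro fjfa_bounded_rate_kernel) auto
  have bal: "balanced (fjfa_trans lam gam mu) p"
    using stat by (simp add: fjfa_stationary_iff_balanced)
  obtain x0 where "x0 \<in> set_pmf p"
    using set_pmf_not_empty[of p] by blast
  then have "0 < pmf p x0"
    by (simp add: pmf_positive)
  then obtain x where x: "x \<noteq> []" "0 < pmf p x"
  proof (cases "x0 = []")
    case True
    have "(lam, [(False, False)]) \<in> set (fjfa_trans lam gam mu x0)"
      by (simp add: True fjfa_trans_def)
    then have "0 < pmf p [(False, False)]"
      using balanced_pmf_pos_successor[OF bal] pos(1) \<open>0 < pmf p x0\<close> by blast
    then show ?thesis
      using that[of "[(False, False)]"] by simp
  next
    case False
    then show ?thesis
      using that \<open>0 < pmf p x0\<close> by blast
  qed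
  have "(\<Sum>y\<in>{x}. pmf p y * sys_compl_rate gam y) \<le> sys_throughput gam p"
    using pos(2)
    by (intro finite_sum_le_has_sum[OF has_sum_sys_throughput]) (simp_all add: sys_compl_rate_def)
  moreover have "0 < pmf p x * sys_compl_rate gam x"
    using x pos(2) by (simp add: sys_compl_rate_def)
  ultimately show ?thesis
    by simp
qed

theorem theorem5:
  fixes lam gam mu :: real and p :: "fjfa_state pmf"
  assumes "lam > 0" and "gam > 0" and "mu > 0"
    and "fjfa_stationary lam gam mu p"
  shows "w_s gam mu p \<ge> gam * (gam + 2 * mu) / (gam * (gam + 2 * mu) + 2 * mu ^ 2) \<and>
         w_r gam mu p \<le> 2 * mu ^ 2 / (gam * (gam + 2 * mu) + 2 * mu ^ 2)"
proof -
  define S R where "S = sys_throughput gam p" and "R = rec_throughput mu p"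
  define c d where "c = gam * (gam + 2 * mu)" and "d = 2 * mu ^ 2"
  have "0 < S"
    unfolding S_def using assms by (rule fjfa_sys_throughput_pos)
  moreover have "0 \<le> R"
    unfolding R_def rec_throughput_def using \<open>mu > 0\<close>
    by (intro infsum_nonneg) (auto simp: rec_compl_rate_def split: option.splits bool.splits)
  moreover have "c * R \<le> d * S"
    using fjfa_throughput_gap_nonpos[OF assms] by (simp add: c_def d_def R_def S_def)
  moreover have "0 < c" "0 < d"
    using assms by (simp_all add: c_def d_def)
  ultimately have "c * (S + R) \<le> S * (c + d)" "R * (c + d) \<le> d * (S + R)" "0 < S + R" "0 < c + d"
    by (simp_all add: algebra_simps)
  then have "c / (c + d) \<le> S / (S + R)" "R / (S + R) \<le> d / (c + d)"
    by (simp_all add: divide_simps)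
  then show ?thesis
    by (simp add: w_s_def w_r_def S_def R_def c_def d_def)
qed

end
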